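(* Let $n\ge 1$ and $G\in\mathcal{G}_{2n}$ with $F(G)=n-1$. Then $f(G)\geq \lfloor n/2\rfloor$.
   Context: All graphs are finite and simple. $\mathcal{G}_{2n}$ denotes the set of all graphs with $2n$ vertices that have a perfect matching. For a perfect matching $M$ of $G$, a forcing set of $M$ is a subset $S\subseteq M$ contained in no other perfect matching of $G$; $f(G,M)$ is the minimum size of a forcing set of $M$. $f(G)$ and $F(G)$ are the minimum and maximum of $f(G,M)$ over all perfect matchings $M$ of $G$. *)

theory Defs
  imports Main
begin

definition simple_graph :: "'a set \<Rightarrow> 'a set set \<Rightarrow> bool" where
  "simple_graph V E \<longleftrightarrow> finite V \<and> (\<forall>e\<in>E. e \<subseteq> V \<and> card e = 2)"

definition perfect_matching :: "'a set \<Rightarrow> 'a set set \<Rightarrow> 'a set set \<Rightarrow> bool" where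
  "perfect_matching V E M \<longleftrightarrow> M \<subseteq> E \<and> (\<forall>v\<in>V. \<exists>!e. e \<in> M \<and> v \<in> e)"

definition perfect_matchings :: "'a set \<Rightarrow> 'a set set \<Rightarrow> 'a set set set" where
  "perfect_matchings V E = {M. perfect_matching V E M}"

definition forcing_set :: "'a set \<Rightarrow> 'a set set \<Rightarrow> 'a set set \<Rightarrow> 'a set set \<Rightarrow> bool" where
  "forcing_set V E M S \<longleftrightarrow> S \<subseteq> M \<and>
     (\<forall>M'. perfect_matching V E M' \<and> S \<subseteq> M' \<longrightarrow> M' = M)"

definition forcing_number :: "'a set \<Rightarrow> 'a set set \<Rightarrow> 'a set set \<Rightarrow> nat" where
  "forcing_number V E M = Min {card S | S. forcing_set V E M S}"

definition min_forcing_number :: "'a set \<Rightarrow> 'a set set \<Rightarrow> nat" where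
  "min_forcing_number V E = Min (forcing_number V E ` perfect_matchings V E)"

definition max_forcing_number :: "'a set \<Rightarrow> 'a set set \<Rightarrow> nat" where
  "max_forcing_number V E = Max (forcing_number V E ` perfect_matchings V E)"

end

theory Submission
  imports Defs
begin

text \<open>Let \<open>M\<^sub>0\<close> be a perfect matching with \<open>f(G,M\<^sub>0) = |M\<^sub>0| - 1\<close>. Dropping any two edges
  \<open>{a,b}, {c,d}\<close> of \<open>M\<^sub>0\<close> leaves a non-forcing set, so \<open>G\<close> contains the square \<open>a c b d\<close>
  or \<open>a d b c\<close>; in particular each edge of \<open>M\<^sub>0\<close> dominates \<open>G\<close>. Now let \<open>S\<close> force some
  perfect matching \<open>M\<close> with \<open>|S| < n/2\<close>. The edges of \<open>S\<close> cover at most \<open>n - 2\<close> vertices, so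
  two edges \<open>{a,b}, {c,d}\<close> of \<open>M\<^sub>0\<close> avoid them. A case analysis shows that \<open>M\<close> has an
  alternating cycle using only matching edges at \<open>a, b, c, d\<close>; switching it gives a second perfect
  matching containing \<open>S\<close>.\<close>

lemma simple_graph_edge:
  assumes "simple_graph V E" "e \<in> E"
  shows "e \<subseteq> V" "card e = 2"
  using assms unfolding simple_graph_def by auto

lemma simple_graph_doubleton:
  assumes "simple_graph V E" "{x,y} \<in> E"
  shows "x \<in> V" "y \<in> V" "x \<noteq> y"
  using assms unfolding simple_graph_def by (auto simp: card_2_iff)

lemma perfect_matching_subset: "perfect_matching V E M \<Longrightarrow> M \<subseteq> E"
  unfolding perfect_matching_def by blast

lemma perfect_matching_edge_unique:
  assumes "perfect_matching V E M" "e \<in> M" "g \<in> M" "v \<in> e" "v \<in> g" "v \<in> V"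
  shows "e = g"
  using assms unfolding perfect_matching_def by blast

lemma perfect_matching_partner_unique:
  assumes "perfect_matching V E M" "{x,y} \<in> M" "{x,z} \<in> M" "x \<in> V"
  shows "y = z"
  using perfect_matching_edge_unique[OF assms(1-3), of x] assms(4)
  by (auto simp: doubleton_eq_iff)

lemma perfect_matching_partner:
  assumes sg: "simple_graph V E" and pm: "perfect_matching V E M" and v: "v \<in> V"
  obtains w where "{v,w} \<in> M" "w \<noteq> v" "w \<in> V"
proof -
  obtain e where e: "e \<in> M" "v \<in> e" using pm v unfolding perfect_matching_def by blast
  then have "card e = 2" "e \<subseteq> V"
    using simple_graph_edge[OF sg] perfect_matching_subset[OF pm] by auto
  then obtain w where "e = {v,w}" "w \<noteq> v"
    using \<open>v \<in> e\<close> by (auto simp: card_2_iff doubleton_eq_iff)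
  with e \<open>e \<subseteq> V\<close> show ?thesis using that by auto
qed

lemma perfect_matching_subset_eq:
  assumes sg: "simple_graph V E" and pm1: "perfect_matching V E M1"
    and pm2: "perfect_matching V E M2" and sub: "M1 \<subseteq> M2"
  shows "M1 = M2"
proof
  show "M2 \<subseteq> M1"
  proof
    fix g assume g: "g \<in> M2"
    then have "card g = 2" "g \<subseteq> V"
      using simple_graph_edge[OF sg] perfect_matching_subset[OF pm2] by auto
    then obtain v where v: "v \<in> g" "v \<in> V" by (auto simp: card_2_iff)
    obtain e where e: "e \<in> M1" "v \<in> e" using pm1 v unfolding perfect_matching_def by blast
    have "e = g" using perfect_matching_edge_unique[OF pm2 _ g e(2) v] e sub by blast
    with e show "g \<in> M1" by simp
  qed
qed (rule sub)

lemma perfect_matching_finite: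
  assumes "simple_graph V E" "perfect_matching V E M"
  shows "finite M"
proof -
  have "M \<subseteq> Pow V"
    using assms simple_graph_edge perfect_matching_subset by blast
  then show ?thesis
    using assms(1) unfolding simple_graph_def by (meson finite_Pow_iff finite_subset)
qed

lemma perfect_matching_card:
  assumes sg: "simple_graph V E" and pm: "perfect_matching V E M"
  shows "card V = 2 * card M"
proof -
  have edge: "e \<subseteq> V" "card e = 2" if "e \<in> M" for e
    using that simple_graph_edge[OF sg] perfect_matching_subset[OF pm] by auto
  have V: "V = \<Union>M"
    using pm edge(1) unfolding perfect_matching_def by blast
  have "pairwise disjnt M"
    unfolding pairwise_def disjnt_def
    using perfect_matching_edge_unique[OF pm] V by blast
  then have "card V = sum card M"
    unfolding V by (rule card_Union_disjoint) (use edge in \<open>auto intro: card_ge_0_finite\<close>)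
  also have "\<dots> = 2 * card M"
    using edge(2) by simp
  finally show ?thesis .
qed

lemma card_matching_edges_meeting:
  assumes pm: "perfect_matching V E M" and U: "U \<subseteq> V" "finite U"
  shows "card {g \<in> M. g \<inter> U \<noteq> {}} \<le> card U"
proof -
  let ?edge = "\<lambda>v. THE g. g \<in> M \<and> v \<in> g"
  have "{g \<in> M. g \<inter> U \<noteq> {}} \<subseteq> ?edge ` U"
  proof
    fix g assume "g \<in> {g \<in> M. g \<inter> U \<noteq> {}}"
    then obtain v where v: "g \<in> M" "v \<in> g" "v \<in> U" by blast
    then have "?edge v = g"
      using perfect_matching_edge_unique[OF pm] U(1) by (intro the_equality) auto
    with v show "g \<in> ?edge ` U" by blast
  qed
  then show ?thesis
    using U(2) by (meson card_image_le card_mono finite_imageI order_trans)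
qed

lemma forcing_number_attained:
  assumes sg: "simple_graph V E" and pm: "perfect_matching V E M"
  obtains S where "forcing_set V E M S" "card S = forcing_number V E M"
    and "\<And>S'. forcing_set V E M S' \<Longrightarrow> card S \<le> card S'"
proof -
  let ?A = "{card S | S. forcing_set V E M S}"
  have "?A \<subseteq> card ` Pow M" unfolding forcing_set_def by auto
  then have "finite ?A"
    using perfect_matching_finite[OF sg pm] by (meson finite_Pow_iff finite_imageI finite_subset)
  moreover have "forcing_set V E M M"
    unfolding forcing_set_def using perfect_matching_subset_eq[OF sg pm] by blast
  then have "?A \<noteq> {}" by blast
  ultimately show ?thesis
    using that Min_in[of ?A] Min_le[of ?A] unfolding forcing_number_def by fastforce
qed

definition rematchable :: "'a set \<Rightarrow> 'a set set \<Rightarrow> 'a set set \<Rightarrow> 'a set set \<Rightarrow> bool" where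
  "rematchable V E M K \<longleftrightarrow> (\<exists>M'. perfect_matching V E M' \<and> M' \<noteq> M \<and> M - K \<subseteq> M')"

lemma rematchable_not_forcing:
  "rematchable V E M K \<Longrightarrow> S \<subseteq> M - K \<Longrightarrow> \<not> forcing_set V E M S"
  unfolding rematchable_def forcing_set_def by blast

lemma rematchable_mono:
  "rematchable V E M K \<Longrightarrow> M \<inter> K \<subseteq> K' \<Longrightarrow> rematchable V E M K'"
  unfolding rematchable_def by blast

lemma rematchable_touching:
  assumes "rematchable V E M K" "\<And>k. k \<in> K \<Longrightarrow> k \<inter> X \<noteq> {}"
  shows "rematchable V E M {g. g \<inter> X \<noteq> {}}"
  by (rule rematchable_mono[OF assms(1)]) (use assms(2) in blast)

lemma perfect_matching_exchange:
  assumes pm: "perfect_matching V E M" and KM: "K \<subseteq> M"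
    and K'E: "K' \<subseteq> E" and U: "\<Union>K' = \<Union>K" and disj: "pairwise disjnt K'"
    and new: "\<not> K' \<subseteq> M"
  shows "rematchable V E M K"
proof -
  have "perfect_matching V E (M - K \<union> K')"
    unfolding perfect_matching_def
  proof (intro conjI ballI)
    show "M - K \<union> K' \<subseteq> E" using perfect_matching_subset[OF pm] K'E by blast
  next
    fix v assume v: "v \<in> V"
    show "\<exists>!e. e \<in> M - K \<union> K' \<and> v \<in> e"
    proof (cases "v \<in> \<Union>K")
      case True
      then obtain e where e: "e \<in> K'" "v \<in> e" using U by blast
      have "g = e" if "g \<in> M - K \<union> K'" "v \<in> g" for g
        using that e True KM perfect_matching_edge_unique[OF pm _ _ _ _ v] disj
        unfolding pairwise_def disjnt_def by blast
      with e show ?thesis by blast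
    next
      case False
      obtain e where e: "e \<in> M" "v \<in> e" using pm v unfolding perfect_matching_def by blast
      have "g = e" if "g \<in> M - K \<union> K'" "v \<in> g" for g
        using that e False U perfect_matching_edge_unique[OF pm _ _ _ _ v] by blast
      with e False show ?thesis by blast
    qed
  qed
  moreover have "M - K \<union> K' \<noteq> M" using new by blast
  ultimately show ?thesis unfolding rematchable_def by blast
qed

text \<open>In the alternating cycles below the \<open>{xi,yi}\<close> are the matching edges and the
  \<open>{yi,x(i+1)}\<close> the non-matching ones.\<close>

lemma alternating_cycle_edge_new:
  assumes "perfect_matching V E M" "{x1,y1} \<in> M" "y1 \<in> V" "x1 \<noteq> x2"
  shows "{y1,x2} \<notin> M"
  using perfect_matching_partner_unique[OF assms(1), of y1 x1 x2] assms(2-4)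
  by (auto simp: insert_commute)

lemma alternating_cycle2:
  assumes sg: "simple_graph V E" and pm: "perfect_matching V E M"
    and M: "{x1,y1} \<in> M" "{x2,y2} \<in> M" and dist: "distinct [x1,y1,x2,y2]"
    and E: "{y1,x2} \<in> E" "{y2,x1} \<in> E"
  shows "rematchable V E M {{x1,y1},{x2,y2}}"
proof (rule perfect_matching_exchange[OF pm, where K' = "{{y1,x2},{y2,x1}}"])
  have "y1 \<in> V" using simple_graph_doubleton[OF sg] E by blast
  then show "\<not> {{y1,x2},{y2,x1}} \<subseteq> M"
    using alternating_cycle_edge_new[OF pm M(1)] dist by auto
qed (use M E dist in \<open>auto simp: pairwise_insert disjnt_def\<close>)

lemma alternating_cycle3:
  assumes sg: "simple_graph V E" and pm: "perfect_matching V E M"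
    and M: "{x1,y1} \<in> M" "{x2,y2} \<in> M" "{x3,y3} \<in> M" and dist: "distinct [x1,y1,x2,y2,x3,y3]"
    and E: "{y1,x2} \<in> E" "{y2,x3} \<in> E" "{y3,x1} \<in> E"
  shows "rematchable V E M {{x1,y1},{x2,y2},{x3,y3}}"
proof (rule perfect_matching_exchange[OF pm, where K' = "{{y1,x2},{y2,x3},{y3,x1}}"])
  have "y1 \<in> V" using simple_graph_doubleton[OF sg] E by blast
  then show "\<not> {{y1,x2},{y2,x3},{y3,x1}} \<subseteq> M"
    using alternating_cycle_edge_new[OF pm M(1)] dist by auto
qed (use M E dist in \<open>auto simp: pairwise_insert disjnt_def\<close>)

lemma alternating_cycle4:
  assumes sg: "simple_graph V E" and pm: "perfect_matching V E M"
    and M: "{x1,y1} \<in> M" "{x2,y2} \<in> M" "{x3,y3} \<in> M" "{x4,y4} \<in> M"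
    and dist: "distinct [x1,y1,x2,y2,x3,y3,x4,y4]"
    and E: "{y1,x2} \<in> E" "{y2,x3} \<in> E" "{y3,x4} \<in> E" "{y4,x1} \<in> E"
  shows "rematchable V E M {{x1,y1},{x2,y2},{x3,y3},{x4,y4}}"
proof (rule perfect_matching_exchange[OF pm, where K' = "{{y1,x2},{y2,x3},{y3,x4},{y4,x1}}"])
  have "y1 \<in> V" using simple_graph_doubleton[OF sg] E by blast
  then show "\<not> {{y1,x2},{y2,x3},{y3,x4},{y4,x1}} \<subseteq> M"
    using alternating_cycle_edge_new[OF pm M(1)] dist by auto
qed (use M E dist in \<open>auto simp: pairwise_insert disjnt_def\<close>)

section \<open>Matchings of forcing number one less than their size\<close>

lemma rematched_edge_within:
  assumes sg: "simple_graph V E" and pm: "perfect_matching V E M"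
    and pm': "perfect_matching V E M'" and KM: "K \<subseteq> M" and sub: "M - K \<subseteq> M'"
    and e: "{x,y} \<in> M'" and x: "x \<in> \<Union>K"
  shows "y \<in> \<Union>K"
proof (rule ccontr)
  assume y: "y \<notin> \<Union>K"
  have xy: "x \<in> V" "y \<in> V"
    using simple_graph_doubleton[OF sg] e perfect_matching_subset[OF pm'] by blast+
  obtain w where w: "{y,w} \<in> M" using perfect_matching_partner[OF sg pm xy(2)] by blast
  then have "{y,w} \<in> M'" using y sub by blast
  then have "w = x"
    using perfect_matching_partner_unique[OF pm', of y w x] e xy by (simp add: insert_commute)
  then have "{x,y} \<in> M" using w by (simp add: insert_commute)
  moreover obtain k where "k \<in> K" "x \<in> k" using x by blast
  ultimately have "{x,y} = k"
    using KM perfect_matching_edge_unique[OF pm, of "{x,y}" k x] xy by blast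
  then show False using y \<open>k \<in> K\<close> by blast
qed

definition alternating_squares :: "'a set set \<Rightarrow> 'a set set \<Rightarrow> bool" where
  "alternating_squares E M \<longleftrightarrow> (\<forall>a b c d. {a,b} \<in> M \<and> {c,d} \<in> M \<and> {a,b} \<noteq> {c,d} \<longrightarrow>
     ({a,c} \<in> E \<and> {b,d} \<in> E) \<or> ({a,d} \<in> E \<and> {b,c} \<in> E))"

lemma alternating_squaresD:
  assumes "alternating_squares E M" "{a,b} \<in> M" "{c,d} \<in> M" "{a,b} \<noteq> {c,d}"
  shows "({a,c} \<in> E \<and> {b,d} \<in> E) \<or> ({a,d} \<in> E \<and> {b,c} \<in> E)"
  using assms unfolding alternating_squares_def by blast

text \<open>Removing two edges from \<open>M\<close> leaves a non-forcing set, so some other perfect matching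
  rematches their four endpoints among themselves.\<close>
lemma alternating_squares_if_forcing_sets_large:
  assumes sg: "simple_graph V E" and pm: "perfect_matching V E M"
    and large: "\<And>S. forcing_set V E M S \<Longrightarrow> card M - 1 \<le> card S"
  shows "alternating_squares E M"
  unfolding alternating_squares_def
proof (intro allI impI, elim conjE)
  fix a b c d assume ab: "{a,b} \<in> M" and cd: "{c,d} \<in> M" and ne: "{a,b} \<noteq> {c,d}"
  let ?K = "{{a,b},{c,d}}"
  have abV: "a \<in> V" "b \<in> V" "a \<noteq> b" and cdV: "c \<in> V" "d \<in> V" "c \<noteq> d"
    using ab cd perfect_matching_subset[OF pm] simple_graph_doubleton[OF sg] by blast+
  have dist: "distinct [a,b,c,d]"
    using perfect_matching_edge_unique[OF pm ab cd] ne abV cdV by auto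
  have V: "x \<in> V" if "x \<in> {a,b,c,d}" for x
    using that abV cdV by blast
  have "card (M - ?K) = card M - 2"
    using ab cd ne perfect_matching_finite[OF sg pm] by (simp add: card_Diff_subset)
  moreover have "card ?K \<le> card M"
    using ab cd perfect_matching_finite[OF sg pm] by (simp add: card_mono)
  moreover have "card ?K = 2" using ne by simp
  ultimately have "\<not> forcing_set V E M (M - ?K)"
    using large[of "M - ?K"] by linarith
  then obtain M' where pm': "perfect_matching V E M'" and sub: "M - ?K \<subseteq> M'" and "M' \<noteq> M"
    unfolding forcing_set_def by blast
  have within: "y \<in> {a,b,c,d}" if "x \<in> {a,b,c,d}" "{x,y} \<in> M'" for x y
  proof -
    have "y \<in> \<Union>?K"
      by (rule rematched_edge_within[OF sg pm pm' _ sub that(2)]) (use ab cd that(1) in auto)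
    then show ?thesis by blast
  qed
  have partner: "\<exists>y\<in>{a,b,c,d} - {x}. {x,y} \<in> M'" if x: "x \<in> {a,b,c,d}" for x
  proof -
    obtain y where "{x,y} \<in> M'" "y \<noteq> x"
      using perfect_matching_partner[OF sg pm' V[OF x]] by blast
    with within x show ?thesis by blast
  qed
  have unique: "y = z" if "{x,y} \<in> M'" "{x,z} \<in> M'" "x \<in> {a,b,c,d}" for x y z
    using perfect_matching_partner_unique[OF pm' that(1,2) V[OF that(3)]] .
  obtain p where p: "p \<in> {b,c,d}" "{a,p} \<in> M'" using partner[of a] dist by auto
  consider "p = b" | "p = c" | "p = d" using p by blast
  then show "({a,c} \<in> E \<and> {b,d} \<in> E) \<or> ({a,d} \<in> E \<and> {b,c} \<in> E)"
  proof cases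
    case 1
    obtain q where "q \<in> {a,b,d}" "{c,q} \<in> M'" using partner[of c] dist by auto
    then have "{c,d} \<in> M'"
      using unique[of a b c] unique[of b a c] p 1 dist by (auto simp: insert_commute)
    then have "M \<subseteq> M'" using sub p 1 by blast
    then show ?thesis
      using perfect_matching_subset_eq[OF sg pm pm'] \<open>M' \<noteq> M\<close> by blast
  next
    case 2
    obtain q where "q \<in> {a,c,d}" "{b,q} \<in> M'" using partner[of b] dist by auto
    then have "{b,d} \<in> M'"
      using unique[of a c b] unique[of c a b] p 2 dist by (auto simp: insert_commute)
    then show ?thesis using p 2 perfect_matching_subset[OF pm'] by blast
  next
    case 3
    obtain q where "q \<in> {a,c,d}" "{b,q} \<in> M'" using partner[of b] dist by auto
    then have "{b,c} \<in> M'"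
      using unique[of a d b] unique[of d a b] p 3 dist by (auto simp: insert_commute)
    then show ?thesis using p 3 perfect_matching_subset[OF pm'] by blast
  qed
qed

lemma alternating_squares_dominate:
  assumes sg: "simple_graph V E" and pm: "perfect_matching V E M"
    and sq: "alternating_squares E M" and ab: "{a,b} \<in> M"
    and u: "u \<in> V" "u \<noteq> a" "u \<noteq> b"
  shows "{u,a} \<in> E \<or> {u,b} \<in> E"
proof -
  obtain w where "{u,w} \<in> M" using perfect_matching_partner[OF sg pm u(1)] by blast
  moreover have "{a,b} \<noteq> {u,w}" using u by (auto simp: doubleton_eq_iff)
  ultimately have "({a,u} \<in> E \<and> {b,w} \<in> E) \<or> ({a,w} \<in> E \<and> {b,u} \<in> E)"
    by (rule alternating_squaresD[OF sq ab])
  then show ?thesis by (auto simp: insert_commute)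
qed

section \<open>Dominating squares\<close>

locale dominating_square =
  fixes V :: "'a set" and E M a b c d
  assumes sg: "simple_graph V E" and pm: "perfect_matching V E M"
    and inV: "a \<in> V" "b \<in> V" "c \<in> V" "d \<in> V"
    and dist: "distinct [a,b,c,d]"
    and square: "{a,b} \<in> E" "{c,d} \<in> E" "{a,c} \<in> E" "{b,d} \<in> E"
    and dominate_ab: "\<And>u. u \<in> V \<Longrightarrow> u \<noteq> a \<Longrightarrow> u \<noteq> b \<Longrightarrow> {u,a} \<in> E \<or> {u,b} \<in> E"
    and dominate_cd: "\<And>u. u \<in> V \<Longrightarrow> u \<noteq> c \<Longrightarrow> u \<noteq> d \<Longrightarrow> {u,c} \<in> E \<or> {u,d} \<in> E"
begin

lemma partner:
  assumes "x \<in> V"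
  obtains y where "{x,y} \<in> M" "y \<noteq> x" "y \<in> V"
  using perfect_matching_partner[OF sg pm assms] by blast

lemma partner_unique: "{x,y} \<in> M \<Longrightarrow> {x,z} \<in> M \<Longrightarrow> x \<in> V \<Longrightarrow> y = z"
  by (rule perfect_matching_partner_unique[OF pm])

lemma cycle2:
  assumes "{x1,y1} \<in> M" "{x2,y2} \<in> M" "distinct [x1,y1,x2,y2]" "{y1,x2} \<in> E" "{y2,x1} \<in> E"
    and "{x1,y1} \<inter> {a,b,c,d} \<noteq> {}" "{x2,y2} \<inter> {a,b,c,d} \<noteq> {}"
  shows "rematchable V E M {g. g \<inter> {a,b,c,d} \<noteq> {}}"
  by (rule rematchable_touching[OF alternating_cycle2[OF sg pm assms(1-5)]]) (use assms in blast)

lemma cycle3: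
  assumes "{x1,y1} \<in> M" "{x2,y2} \<in> M" "{x3,y3} \<in> M" "distinct [x1,y1,x2,y2,x3,y3]"
    and "{y1,x2} \<in> E" "{y2,x3} \<in> E" "{y3,x1} \<in> E"
    and "{x1,y1} \<inter> {a,b,c,d} \<noteq> {}" "{x2,y2} \<inter> {a,b,c,d} \<noteq> {}" "{x3,y3} \<inter> {a,b,c,d} \<noteq> {}"
  shows "rematchable V E M {g. g \<inter> {a,b,c,d} \<noteq> {}}"
  by (rule rematchable_touching[OF alternating_cycle3[OF sg pm assms(1-7)]]) (use assms in blast)

lemma cycle4:
  assumes "{x1,y1} \<in> M" "{x2,y2} \<in> M" "{x3,y3} \<in> M" "{x4,y4} \<in> M"
    and "distinct [x1,y1,x2,y2,x3,y3,x4,y4]"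
    and "{y1,x2} \<in> E" "{y2,x3} \<in> E" "{y3,x4} \<in> E" "{y4,x1} \<in> E"
    and "{x1,y1} \<inter> {a,b,c,d} \<noteq> {}" "{x2,y2} \<inter> {a,b,c,d} \<noteq> {}"
      "{x3,y3} \<inter> {a,b,c,d} \<noteq> {}" "{x4,y4} \<inter> {a,b,c,d} \<noteq> {}"
  shows "rematchable V E M {g. g \<inter> {a,b,c,d} \<noteq> {}}"
  by (rule rematchable_touching[OF alternating_cycle4[OF sg pm assms(1-9)]]) (use assms in blast)

lemma rematchable_if_ab_matched:
  assumes ab: "{a,b} \<in> M"
  shows "rematchable V E M {g. g \<inter> {a,b,c,d} \<noteq> {}}"
proof (cases "{c,d} \<in> M")
  case True
  then show ?thesis
    using cycle2[of a b d c] ab dist square by (auto simp: insert_commute)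
next
  case False
  obtain c' where c': "{c,c'} \<in> M" "c' \<noteq> c" "c' \<in> V" using partner inV by blast
  obtain d' where d': "{d,d'} \<in> M" "d' \<noteq> d" "d' \<in> V" using partner inV by blast
  have c'_new: "c' \<noteq> a" "c' \<noteq> b" "c' \<noteq> d"
    using partner_unique[of a b c] partner_unique[of b a c] ab c' inV dist False
    by (auto simp: insert_commute)
  have d'_new: "d' \<noteq> a" "d' \<noteq> b" "d' \<noteq> c" "d' \<noteq> c'"
    using partner_unique[of a b d] partner_unique[of b a d] partner_unique[of c' c d]
      ab c' d' inV dist False by (auto simp: insert_commute)
  consider "{c',b} \<in> E" | "{d',a} \<in> E" | "{c',a} \<in> E" "{d',b} \<in> E"
    using dominate_ab[of c'] dominate_ab[of d'] c' d' c'_new d'_new by blast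
  then show ?thesis
  proof cases
    case 1
    then show ?thesis
      using cycle2[of b a c c'] ab c' c'_new dist square by (auto simp: insert_commute)
  next
    case 2
    then show ?thesis
      using cycle2[of a b d d'] ab d' d'_new dist square by (auto simp: insert_commute)
  next
    case 3
    then show ?thesis
      using cycle3[of a b d' d c c'] ab c' d' c'_new d'_new dist square
      by (auto simp: insert_commute)
  qed
qed

lemma rematchable_if_ac_matched:
  assumes ac: "{a,c} \<in> M"
  shows "rematchable V E M {g. g \<inter> {a,b,c,d} \<noteq> {}}"
proof -
  obtain d' where d': "{d,d'} \<in> M" "d' \<noteq> d" "d' \<in> V" using partner inV by blast
  have d'_new: "d' \<noteq> a" "d' \<noteq> c"
    using partner_unique[of a c d] partner_unique[of c a d] ac d' inV dist
    by (auto simp: insert_commute)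
  show ?thesis
  proof (cases "d' = b")
    case True
    then show ?thesis
      using cycle2[of a c d b] ac d' dist square by (auto simp: insert_commute)
  next
    case d'b: False
    consider "{d',a} \<in> E" | "{d',b} \<in> E" using dominate_ab[of d'] d' d'_new d'b by blast
    then show ?thesis
    proof cases
      case 1
      then show ?thesis
        using cycle2[of a c d d'] ac d' d'_new dist square by (auto simp: insert_commute)
    next
      case d'b_edge: 2
      obtain b' where b': "{b,b'} \<in> M" "b' \<noteq> b" "b' \<in> V" using partner inV by blast
      have b'_new: "b' \<noteq> a" "b' \<noteq> c" "b' \<noteq> d" "b' \<noteq> d'"
        using partner_unique[of a c b] partner_unique[of c a b] partner_unique[of d d' b]
          partner_unique[of d' d b] ac b' d' inV dist d'b by (auto simp: insert_commute)
      consider "{b',c} \<in> E" | "{b',d} \<in> E" using dominate_cd[of b'] b' b'_new by blast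
      then show ?thesis
      proof cases
        case 1
        then show ?thesis
          using cycle2[of a c b' b] ac b' b'_new dist square by (auto simp: insert_commute)
      next
        case 2
        then show ?thesis
          using cycle2[of b b' d d'] d'b_edge b' d' b'_new d'_new d'b dist
          by (auto simp: insert_commute)
      qed
    qed
  qed
qed

lemma rematchable_if_ad_matched:
  assumes ad: "{a,d} \<in> M"
  shows "rematchable V E M {g. g \<inter> {a,b,c,d} \<noteq> {}}"
proof -
  obtain b' where b': "{b,b'} \<in> M" "b' \<noteq> b" "b' \<in> V" using partner inV by blast
  have b'_new: "b' \<noteq> a" "b' \<noteq> d"
    using partner_unique[of a d b] partner_unique[of d a b] ad b' inV dist
    by (auto simp: insert_commute)
  show ?thesis
  proof (cases "b' = c")
    case True
    then show ?thesis
      using cycle2[of a d b c] ad b' dist square by (auto simp: insert_commute)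
  next
    case b'c: False
    consider "{b',d} \<in> E" | "{b',c} \<in> E" using dominate_cd[of b'] b' b'_new b'c by blast
    then show ?thesis
    proof cases
      case 1
      then show ?thesis
        using cycle2[of a d b' b] ad b' b'_new dist square by (auto simp: insert_commute)
    next
      case b'c_edge: 2
      obtain c' where c': "{c,c'} \<in> M" "c' \<noteq> c" "c' \<in> V" using partner inV by blast
      have c'_new: "c' \<noteq> a" "c' \<noteq> b" "c' \<noteq> d" "c' \<noteq> b'"
        using partner_unique[of a d c] partner_unique[of d a c] partner_unique[of b b' c]
          partner_unique[of b' b c] ad b' c' inV dist b'c by (auto simp: insert_commute)
      consider "{c',a} \<in> E" | "{c',b} \<in> E" using dominate_ab[of c'] c' c'_new by blast
      then show ?thesis
      proof cases
        case 1
        then show ?thesis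
          using cycle2[of a d c c'] ad c' c'_new dist square by (auto simp: insert_commute)
      next
        case 2
        then show ?thesis
          using cycle2[of b b' c c'] b'c_edge b' c' b'_new c'_new b'c dist
          by (auto simp: insert_commute)
      qed
    qed
  qed
qed

lemma rematchable_if_no_inner_edge_matched:
  assumes none: "{a,b} \<notin> M" "{a,c} \<notin> M" "{a,d} \<notin> M" "{b,c} \<notin> M" "{b,d} \<notin> M" "{c,d} \<notin> M"
  shows "rematchable V E M {g. g \<inter> {a,b,c,d} \<noteq> {}}"
proof -
  obtain a' where a': "{a,a'} \<in> M" "a' \<noteq> a" "a' \<in> V" using partner inV by blast
  obtain b' where b': "{b,b'} \<in> M" "b' \<noteq> b" "b' \<in> V" using partner inV by blast
  obtain c' where c': "{c,c'} \<in> M" "c' \<noteq> c" "c' \<in> V" using partner inV by blast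
  obtain d' where d': "{d,d'} \<in> M" "d' \<noteq> d" "d' \<in> V" using partner inV by blast
  have outside: "a' \<notin> {a,b,c,d}" "b' \<notin> {a,b,c,d}" "c' \<notin> {a,b,c,d}" "d' \<notin> {a,b,c,d}"
    using a' b' c' d' none by (auto simp: insert_commute)
  have "distinct [a,a',b,b',c,c',d,d']"
    using partner_unique[of a' a b] partner_unique[of a' a c] partner_unique[of a' a d]
      partner_unique[of b' b c] partner_unique[of b' b d] partner_unique[of c' c d]
      a' b' c' d' outside dist by (auto simp: insert_commute)
  note facts = this a' b' c' d' square
  txt \<open>Each outer partner is adjacent to the opposite pair; every combination of these
    adjacencies closes an alternating 4-cycle or 8-cycle.\<close>
  consider "{a',c} \<in> E" | "{a',d} \<in> E" using dominate_cd[of a'] a' outside by blast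
  moreover consider "{b',c} \<in> E" | "{b',d} \<in> E" using dominate_cd[of b'] b' outside by blast
  moreover consider "{c',a} \<in> E" | "{c',b} \<in> E" using dominate_ab[of c'] c' outside by blast
  moreover consider "{d',a} \<in> E" | "{d',b} \<in> E" using dominate_ab[of d'] d' outside by blast
  moreover have ?thesis if "{a',c} \<in> E" "{c',a} \<in> E"
    using cycle2[of a a' c c'] that facts by (auto simp: insert_commute)
  moreover have ?thesis if "{a',d} \<in> E" "{d',a} \<in> E"
    using cycle2[of a a' d d'] that facts by (auto simp: insert_commute)
  moreover have ?thesis if "{b',c} \<in> E" "{c',b} \<in> E"
    using cycle2[of b b' c c'] that facts by (auto simp: insert_commute)
  moreover have ?thesis if "{b',d} \<in> E" "{d',b} \<in> E"
    using cycle2[of b b' d d'] that facts by (auto simp: insert_commute)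
  moreover have ?thesis if "{a',c} \<in> E" "{c',b} \<in> E" "{b',d} \<in> E" "{d',a} \<in> E"
    using cycle4[of a a' c c' b b' d d'] that facts by (auto simp: insert_commute)
  moreover have ?thesis if "{a',d} \<in> E" "{d',b} \<in> E" "{b',c} \<in> E" "{c',a} \<in> E"
    using cycle4[of a a' d d' b b' c c'] that facts by (auto simp: insert_commute)
  ultimately show ?thesis by metis
qed

lemma swap_pairs: "dominating_square V E M c d a b"
  by unfold_locales (use sg pm inV dist square dominate_ab dominate_cd in \<open>auto simp: insert_commute\<close>)

lemma swap_within_pairs: "dominating_square V E M b a d c"
  by unfold_locales (use sg pm inV dist square dominate_ab dominate_cd in \<open>auto simp: insert_commute\<close>)

theorem rematchable:
  "rematchable V E M {g. g \<inter> {a,b,c,d} \<noteq> {}}"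
proof -
  have cdab: "{c,d,a,b} = {a,b,c,d}" and badc: "{b,a,d,c} = {a,b,c,d}" by auto
  note cd_matched = dominating_square.rematchable_if_ab_matched[OF swap_pairs, unfolded cdab]
  note bd_matched = dominating_square.rematchable_if_ac_matched[OF swap_within_pairs, unfolded badc]
  note bc_matched = dominating_square.rematchable_if_ad_matched[OF swap_within_pairs, unfolded badc]
  show ?thesis
    using rematchable_if_ab_matched cd_matched rematchable_if_ac_matched bd_matched
      rematchable_if_ad_matched bc_matched rematchable_if_no_inner_edge_matched
    by (metis insert_commute)
qed

end

lemma dominating_square_if_alternating_squares:
  assumes sg: "simple_graph V E" and pm0: "perfect_matching V E M0"
    and sq: "alternating_squares E M0" and pm: "perfect_matching V E M"
    and ab: "{a,b} \<in> M0" and cd: "{c,d} \<in> M0" and ne: "{a,b} \<noteq> {c,d}"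
    and ac: "{a,c} \<in> E" and bd: "{b,d} \<in> E"
  shows "dominating_square V E M a b c d"
proof
  show abE: "{a,b} \<in> E" and cdE: "{c,d} \<in> E"
    using ab cd perfect_matching_subset[OF pm0] by blast+
  show "a \<in> V" "b \<in> V" "c \<in> V" "d \<in> V"
    using simple_graph_doubleton[OF sg abE] simple_graph_doubleton[OF sg cdE] by simp_all
  then show "distinct [a,b,c,d]"
    using perfect_matching_edge_unique[OF pm0 ab cd] ne
      simple_graph_doubleton(3)[OF sg abE] simple_graph_doubleton(3)[OF sg cdE] by auto
  show "{u,a} \<in> E \<or> {u,b} \<in> E" if "u \<in> V" "u \<noteq> a" "u \<noteq> b" for u
    using alternating_squares_dominate[OF sg pm0 sq ab that] .
  show "{u,c} \<in> E \<or> {u,d} \<in> E" if "u \<in> V" "u \<noteq> c" "u \<noteq> d" for u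
    using alternating_squares_dominate[OF sg pm0 sq cd that] .
qed (use sg pm ac bd in auto)

lemma card_matching_le_avoiding:
  assumes sg: "simple_graph V E" and pm: "perfect_matching V E M" and S: "S \<subseteq> E" "finite S"
  shows "card M \<le> card {g \<in> M. g \<inter> \<Union>S = {}} + 2 * card S"
proof -
  have "\<Union>S \<subseteq> V" using S simple_graph_edge[OF sg] by blast
  moreover have "finite V" using sg unfolding simple_graph_def by blast
  ultimately have "card {g \<in> M. g \<inter> \<Union>S \<noteq> {}} \<le> card (\<Union>S)"
    by (intro card_matching_edges_meeting[OF pm]) (auto intro: finite_subset)
  also have "\<dots> \<le> sum card S" by (rule card_Union_le_sum_card)
  also have "\<dots> = sum (\<lambda>_. 2) S"
    using S(1) simple_graph_edge(2)[OF sg] by (intro sum.cong) auto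
  also have "\<dots> = 2 * card S" by simp
  finally have "card {g \<in> M. g \<inter> \<Union>S \<noteq> {}} \<le> 2 * card S" .
  moreover have "M = {g \<in> M. g \<inter> \<Union>S = {}} \<union> {g \<in> M. g \<inter> \<Union>S \<noteq> {}}" by blast
  then have "card M \<le> card {g \<in> M. g \<inter> \<Union>S = {}} + card {g \<in> M. g \<inter> \<Union>S \<noteq> {}}"
    using card_Un_le by (metis (no_types))
  ultimately show ?thesis by linarith
qed

lemma forcing_set_card_ge_half:
  assumes sg: "simple_graph V E" and pm0: "perfect_matching V E M0"
    and sq: "alternating_squares E M0" and pm: "perfect_matching V E M"
    and S: "forcing_set V E M S"
  shows "card M0 div 2 \<le> card S"
proof (rule ccontr)
  assume small: "\<not> card M0 div 2 \<le> card S"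
  have SE: "S \<subseteq> E" "finite S"
    using S perfect_matching_subset[OF pm] perfect_matching_finite[OF sg pm]
    unfolding forcing_set_def by (auto intro: finite_subset)
  define T where "T = {g \<in> M0. g \<inter> \<Union>S = {}}"
  have "finite T" using perfect_matching_finite[OF sg pm0] unfolding T_def by simp
  moreover have "\<not> card T \<le> Suc 0"
    using card_matching_le_avoiding[OF sg pm0 SE] small unfolding T_def by linarith
  ultimately obtain e f where "e \<in> T" "f \<in> T" "e \<noteq> f"
    by (meson card_le_Suc0_iff_eq)
  then have ef: "e \<in> M0" "f \<in> M0" "e \<noteq> f" and avoid: "(e \<union> f) \<inter> \<Union>S = {}"
    unfolding T_def by auto
  obtain a b c d where ab: "e = {a,b}" and cd: "f = {c,d}" and square: "{a,c} \<in> E" "{b,d} \<in> E"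
  proof -
    have "card e = 2" "card f = 2"
      using ef(1,2) perfect_matching_subset[OF pm0] simple_graph_edge(2)[OF sg] by blast+
    then obtain a b c d where e: "e = {a,b}" and f: "f = {c,d}" by (meson card_2_iff)
    then have "({a,c} \<in> E \<and> {b,d} \<in> E) \<or> ({a,d} \<in> E \<and> {b,c} \<in> E)"
      using alternating_squaresD[OF sq] ef by blast
    moreover have "f = {d,c}" using f by (simp add: insert_commute)
    ultimately show ?thesis using that[OF e f] that[OF e \<open>f = {d,c}\<close>] by blast
  qed
  interpret dominating_square V E M a b c d
    by (rule dominating_square_if_alternating_squares[OF sg pm0 sq pm]) (use ef ab cd square in auto)
  have "S \<subseteq> M - {g. g \<inter> {a,b,c,d} \<noteq> {}}"
    using S avoid ab cd unfolding forcing_set_def by blast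
  then show False
    using rematchable_not_forcing[OF rematchable] S by blast
qed

lemma finite_perfect_matchings:
  assumes "simple_graph V E"
  shows "finite (perfect_matchings V E)"
proof -
  have "finite E"
    using assms unfolding simple_graph_def by (meson Pow_iff finite_Pow_iff finite_subset subsetI)
  moreover have "perfect_matchings V E \<subseteq> Pow E"
    unfolding perfect_matchings_def perfect_matching_def by auto
  ultimately show ?thesis by (meson finite_Pow_iff finite_subset)
qed

theorem corollary5p2:
  fixes V :: "'a set" and E :: "'a set set" and n :: nat
  assumes "n \<ge> 1"
    and "simple_graph V E"
    and "card V = 2 * n"
    and "perfect_matchings V E \<noteq> {}"
    and "max_forcing_number V E = n - 1"
  shows "min_forcing_number V E \<ge> n div 2"
proof -
  note sg = assms(2)
  let ?fn = "forcing_number V E"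
  have fin: "finite (?fn ` perfect_matchings V E)" "?fn ` perfect_matchings V E \<noteq> {}"
    using finite_perfect_matchings[OF sg] assms(4) by auto
  obtain M0 where pm0: "perfect_matching V E M0" and M0: "?fn M0 = n - 1"
    using Max_in[OF fin] assms(5) unfolding max_forcing_number_def perfect_matchings_def by auto
  obtain M where pm: "perfect_matching V E M" and M: "?fn M = min_forcing_number V E"
    using Min_in[OF fin] unfolding min_forcing_number_def perfect_matchings_def by auto
  have "card M0 = n" using perfect_matching_card[OF sg pm0] assms(3) by simp
  then have "alternating_squares E M0"
    using alternating_squares_if_forcing_sets_large[OF sg pm0]
      forcing_number_attained[OF sg pm0] M0 by metis
  moreover obtain S where "forcing_set V E M S" "card S = min_forcing_number V E"
    using forcing_number_attained[OF sg pm] M by metis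
  ultimately show ?thesis
    using forcing_set_card_ge_half[OF sg pm0 _ pm] \<open>card M0 = n\<close> by metis
qed

end
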